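(* Let $D=(D_1,D_2)$ with $D_1\in\mathcal{U}(n,s^p)$ (qualitative factors) and $D_2\in\mathcal{U}(n,2^q)$ (quantitative factors). Then $\mathrm{QQD}^2(D)\ge LB_2$, where $$LB_2=-\left(\frac{5s+1}{4s}\right)^p\left(\frac43\right)^q+\left(\frac{5s+1}{4s}\right)^p\left(\frac{11}{8}\right)^q+\frac{1}{n^2}\left(\frac54\right)^{p+q}\sum_{k=1}^{p+q}\left(\frac15\right)^k\sum_{k_1+k_2=k}\binom{p}{k_1}\binom{q}{k_2}r_{n,k_1,k_2,s,2}\left(1-\frac{r_{n,k_1,k_2,s,2}}{s^{k_1}2^{k_2}}\right),$$ with $r_{n,k_1,k_2,s,2}$ the remainder of $n$ modulo $s^{k_1}2^{k_2}$ (the inner sum over nonnegative integers $k_1,k_2$, with $\binom{p}{k_1}=0$ for $k_1>p$ and $\binom{q}{k_2}=0$ for $k_2>q$).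
   Context: $\mathcal{U}(n,s^p2^q)$: $n\times(p+q)$ matrices whose first $p$ columns each take every value in $\{0,\dots,s-1\}$ equally often (qualitative factors) and whose last $q$ columns each take every value in $\{0,1\}$ equally often (quantitative factors). For quantitative columns a level $x\in\{0,1\}$ is transformed to $(2x+1)/4\in[0,1]$. Let $\chi=\prod_k\chi_k$, $\chi_k=\{0,\dots,s-1\}$ for $k\le p$, $\chi_k=[0,1]$ for $k>p$, and $F$ the uniform distribution on $\chi$. Kernel: $\mathcal{K}(t,z)=\prod_k\mathcal{K}_k(t_k,z_k)$ with $\mathcal{K}_k=(3/2)^{\delta_{t_kz_k}}(5/4)^{1-\delta_{t_kz_k}}$ for $k\le p$ ($\delta$ the Kronecker delta) and $\mathcal{K}_k=\frac32-|t_k-z_k|+|t_k-z_k|^2$ for $k>p$. For $D$ with (transformed) rows $x_1,\dots,x_n$, the squared qualitative-quantitative discrepancy is $\mathrm{QQD}^2(D)=\int_{\chi^2}\mathcal{K}\,dF\,dF-\frac2n\sum_i\int_\chi\mathcal{K}(t,x_i)dF(t)+\frac1{n^2}\sum_{i,j}\mathcal{K}(x_i,x_j)$. *)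

theory Defs
  imports "HOL-Probability.Probability"
begin

text \<open>Designs are n x m matrices D :: nat => nat => nat, D i k = entry in row i < n,
  column k < m (0-indexed). Columns k < p are qualitative (levels 0..s-1),
  columns p <= k < p+q are quantitative (levels 0,1).\<close>

definition balanced_col :: "nat \<Rightarrow> nat \<Rightarrow> (nat \<Rightarrow> nat) \<Rightarrow> bool" where
  "balanced_col n s c \<longleftrightarrow> (\<forall>i<n. c i < s) \<and>
     (\<forall>v<s. \<forall>w<s. card {i. i < n \<and> c i = v} = card {i. i < n \<and> c i = w})"

definition in_U :: "nat \<Rightarrow> nat \<Rightarrow> nat \<Rightarrow> (nat \<Rightarrow> nat \<Rightarrow> nat) \<Rightarrow> bool" where
  "in_U n s m D \<longleftrightarrow> (\<forall>k<m. balanced_col n s (\<lambda>i. D i k))"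

definition design_point :: "nat \<Rightarrow> nat \<Rightarrow> (nat \<Rightarrow> nat \<Rightarrow> nat) \<Rightarrow> (nat \<Rightarrow> nat \<Rightarrow> nat)
     \<Rightarrow> nat \<Rightarrow> (nat \<Rightarrow> real)" where
  "design_point p q D1 D2 i = (\<lambda>k. if k < p then real (D1 i k)
       else if k < p + q then (2 * real (D2 i (k - p)) + 1) / 4 else undefined)"

definition coord_measure :: "nat \<Rightarrow> nat \<Rightarrow> nat \<Rightarrow> real measure" where
  "coord_measure p s k = (if k < p then uniform_count_measure (real ` {0..<s})
                          else uniform_measure lborel {0..1})"

definition F_QQ :: "nat \<Rightarrow> nat \<Rightarrow> nat \<Rightarrow> (nat \<Rightarrow> real) measure" where
  "F_QQ p q s = (\<Pi>\<^sub>M k\<in>{0..<p+q}. coord_measure p s k)"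

definition kernel_QQ :: "nat \<Rightarrow> nat \<Rightarrow> (nat \<Rightarrow> real) \<Rightarrow> (nat \<Rightarrow> real) \<Rightarrow> real" where
  "kernel_QQ p q t z = (\<Prod>k\<in>{0..<p+q}.
      if k < p then (if t k = z k then 3/2 else 5/4)
      else 3/2 - \<bar>t k - z k\<bar> + \<bar>t k - z k\<bar>^2)"

definition QQD2 :: "nat \<Rightarrow> nat \<Rightarrow> nat \<Rightarrow> nat \<Rightarrow> (nat \<Rightarrow> nat \<Rightarrow> nat) \<Rightarrow> (nat \<Rightarrow> nat \<Rightarrow> nat) \<Rightarrow> real" where
  "QQD2 n p q s D1 D2 =
     (let F = F_QQ p q s; K = kernel_QQ p q; x = design_point p q D1 D2 in
      integral\<^sup>L (F \<Otimes>\<^sub>M F) (\<lambda>(t, z). K t z)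
      - 2 / real n * (\<Sum>i<n. integral\<^sup>L F (\<lambda>t. K t (x i)))
      + 1 / (real n)^2 * (\<Sum>i<n. \<Sum>j<n. K (x i) (x j)))"

definition LB2 :: "nat \<Rightarrow> nat \<Rightarrow> nat \<Rightarrow> nat \<Rightarrow> real" where
  "LB2 n p q s =
     - (((5 * real s + 1) / (4 * real s))^p * (4/3)^q)
     + ((5 * real s + 1) / (4 * real s))^p * (11/8)^q
     + 1 / (real n)^2 * (5/4)^(p+q) *
       (\<Sum>k=1..p+q. (1/5)^k * (\<Sum>k1=0..k.
          let k2 = k - k1; r = real (n mod (s^k1 * 2^k2)) in
          real (p choose k1) * real (q choose k2) * r * (1 - r / (real s^k1 * 2^k2))))"

end

theory Submission
  imports Defs
begin

(* The kernel is a product of one-dimensional kernels, so every integral in QQD^2 factorizes over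
   the coordinates.  Against the uniform law a qualitative coordinate has mean (5s+1)/(4s), and a
   quantitative one has mean Phi z + Phi (1 - z) at z, where Phi is the primitive of 3/2 - u + u^2
   vanishing at 0; this mean is 4/3 at both design levels 1/4, 3/4 and also on average over [0,1].
   Hence the first two terms of QQD^2 add up to -((5s+1)/(4s))^p (4/3)^q.

   On the design levels every coordinate kernel equals 5/4 (1 + [a = b]/5), so expanding the
   product gives K(x_i, x_j) = (5/4)^(p+q) * sum over S of 5^-|S| [x_i and x_j agree on S].  For a
   fixed S the rows fall into N_S cells, and since integer cell counts with total n have sum of
   squares at least n^2/N_S + r (1 - r/N_S), r = n mod N_S, so does the number of agreeing ordered
   pairs.  Summing over S, grouped by the sizes of its qualitative and quantitative parts, gives
   LB_2. *)

section \<open>Coordinate kernels\<close>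

definition dist_kernel :: "real \<Rightarrow> real" where
  "dist_kernel u = 3/2 - u + u^2"

definition dist_kernel_primitive :: "real \<Rightarrow> real" where
  "dist_kernel_primitive u = 3/2 * u - u^2 / 2 + u^3 / 3"

definition coord_kernel :: "nat \<Rightarrow> nat \<Rightarrow> real \<Rightarrow> real \<Rightarrow> real" where
  "coord_kernel p k a b =
     (if k < p then (if a = b then 3/2 else 5/4) else dist_kernel \<bar>a - b\<bar>)"

lemma kernel_QQ_eq_prod_coord_kernel:
  "kernel_QQ p q t z = (\<Prod>k\<in>{0..<p+q}. coord_kernel p k (t k) (z k))"
  unfolding kernel_QQ_def coord_kernel_def dist_kernel_def by simp

lemma dist_kernel_pos: "0 < dist_kernel u"
proof -
  have "dist_kernel u = (u - 1/2)^2 + 5/4"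
    by (simp add: dist_kernel_def power2_eq_square algebra_simps)
  then show ?thesis
    by (metis add_nonneg_pos zero_le_power2 divide_pos_pos zero_less_numeral)
qed

lemma dist_kernel_primitive_nonneg: "0 \<le> u \<Longrightarrow> 0 \<le> dist_kernel_primitive u"
proof -
  assume "0 \<le> u"
  moreover have "dist_kernel_primitive u = u * ((u - 3/4)^2 / 3 + 21/16)"
    by (simp add: dist_kernel_primitive_def power2_eq_square power3_eq_cube field_simps)
  ultimately show ?thesis by simp
qed

lemma coord_kernel_nonneg: "0 \<le> coord_kernel p k a b"
  using dist_kernel_pos[of "\<bar>a - b\<bar>"] by (simp add: coord_kernel_def)

lemma kernel_QQ_nonneg: "0 \<le> kernel_QQ p q t z"
  by (simp add: kernel_QQ_eq_prod_coord_kernel coord_kernel_nonneg prod_nonneg)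

lemma borel_measurable_coord_kernel[measurable (raw)]:
  assumes "f \<in> borel_measurable M" "g \<in> borel_measurable M"
  shows "(\<lambda>w. coord_kernel p k (f w) (g w)) \<in> borel_measurable M"
  unfolding coord_kernel_def dist_kernel_def using assms by measurable

lemma borel_measurable_coord_measure:
  "f \<in> borel_measurable borel \<Longrightarrow> f \<in> borel_measurable (coord_measure p s k)"
  by (simp add: coord_measure_def measurable_cong_sets[OF sets_uniform_count_measure_count_space refl]
      measurable_cong_sets[OF sets_uniform_measure refl])

lemma prob_space_coord_measure:
  assumes "k < p \<Longrightarrow> 0 < s"
  shows "prob_space (coord_measure p s k)"
  using assms by (auto simp: coord_measure_def intro!: prob_space_uniform_count_measure prob_space_uniform_measure)

lemma prob_space_F_QQ: "(0 < p \<Longrightarrow> 0 < s) \<Longrightarrow> prob_space (F_QQ p q s)"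
  unfolding F_QQ_def by (intro prob_space_PiM prob_space_coord_measure) auto

lemma borel_measurable_F_QQ_component:
  "k < p + q \<Longrightarrow> (\<lambda>t. t k) \<in> borel_measurable (F_QQ p q s)"
  unfolding F_QQ_def
  by (rule measurable_compose[OF measurable_component_singleton[of k _ "coord_measure p s"]
        borel_measurable_coord_measure[of "\<lambda>x. x"]]) auto

lemma borel_measurable_kernel_QQ:
  assumes "\<And>k. k < p + q \<Longrightarrow> (\<lambda>w. f w k) \<in> borel_measurable M"
    and "\<And>k. k < p + q \<Longrightarrow> (\<lambda>w. g w k) \<in> borel_measurable M"
  shows "(\<lambda>w. kernel_QQ p q (f w) (g w)) \<in> borel_measurable M"
  unfolding kernel_QQ_eq_prod_coord_kernel using assms by (intro borel_measurable_prod) auto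

section \<open>Kernel means under the uniform distribution\<close>

definition qual_mean :: "nat \<Rightarrow> real" where
  "qual_mean s = (5 * real s + 1) / (4 * real s)"

definition coord_mean :: "nat \<Rightarrow> nat \<Rightarrow> nat \<Rightarrow> real \<Rightarrow> ennreal" where
  "coord_mean p s k z = (\<integral>\<^sup>+t. ennreal (coord_kernel p k t z) \<partial>coord_measure p s k)"

lemma nn_integral_uniform_count_measure:
  assumes "finite A" "\<And>x. x \<in> A \<Longrightarrow> 0 \<le> f x"
  shows "(\<integral>\<^sup>+x. ennreal (f x) \<partial>uniform_count_measure A) = ennreal (sum f A / card A)"
proof -
  have "integrable (uniform_count_measure A) f"
    using assms(1) by (simp add: uniform_count_measure_def integrable_point_measure_finite)
  moreover have "AE x in uniform_count_measure A. 0 \<le> f x"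
    using assms(2) by (intro AE_I2) (simp add: space_uniform_count_measure)
  ultimately show ?thesis
    using assms(1) by (simp add: nn_integral_eq_integral integral_uniform_count_measure)
qed

lemma coord_mean_qualitative:
  assumes "k < p" "z \<in> real ` {0..<s}"
  shows "coord_mean p s k z = ennreal (qual_mean s)"
proof -
  let ?S = "real ` {0..<s}"
  have card_S: "card ?S = s" by (simp add: card_image)
  have "0 < s" using assms(2) by auto
  have "(\<Sum>t\<in>?S. coord_kernel p k t z) = (\<Sum>t\<in>?S. 5/4 + (if t = z then 1/4 else 0))"
    using assms(1) by (intro sum.cong) (auto simp: coord_kernel_def)
  also have "\<dots> = 5/4 * s + 1/4"
    using assms(2) by (simp add: sum.distrib card_S)
  finally show ?thesis
    using assms(1) \<open>0 < s\<close>
    by (simp add: coord_mean_def coord_measure_def nn_integral_uniform_count_measure coord_kernel_nonneg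
        card_S qual_mean_def field_simps)
qed

lemma nn_integral_Icc_split:
  fixes f :: "real \<Rightarrow> ennreal"
  assumes "f \<in> borel_measurable borel" "a \<le> c" "c \<le> b"
  shows "(\<integral>\<^sup>+t. f t * indicator {a..b} t \<partial>lborel)
       = (\<integral>\<^sup>+t. f t * indicator {a..c} t \<partial>lborel) + (\<integral>\<^sup>+t. f t * indicator {c..b} t \<partial>lborel)"
proof -
  have "AE t in lborel. f t * indicator {a..b} t = f t * indicator {a..c} t + f t * indicator {c..b} t"
    using AE_lborel_singleton[of c] by eventually_elim (use assms in \<open>auto simp: indicator_def\<close>)
  then have "(\<integral>\<^sup>+t. f t * indicator {a..b} t \<partial>lborel)
      = (\<integral>\<^sup>+t. f t * indicator {a..c} t + f t * indicator {c..b} t \<partial>lborel)"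
    by (rule nn_integral_cong_AE)
  also have "\<dots> = (\<integral>\<^sup>+t. f t * indicator {a..c} t \<partial>lborel) + (\<integral>\<^sup>+t. f t * indicator {c..b} t \<partial>lborel)"
    using assms(1) by (intro nn_integral_add) auto
  finally show ?thesis .
qed

lemma nn_integral_dist_kernel_from_right:
  assumes "a \<le> b"
  shows "(\<integral>\<^sup>+t. ennreal (dist_kernel (b - t)) * indicator {a..b} t \<partial>lborel)
       = ennreal (dist_kernel_primitive (b - a))"
proof -
  have "(\<integral>\<^sup>+t. ennreal (dist_kernel (b - t)) * indicator {a..b} t \<partial>lborel)
      = ennreal (- dist_kernel_primitive (b - b) - - dist_kernel_primitive (b - a))"
  proof (rule nn_integral_FTC_Icc)
    show "DERIV (\<lambda>t. - dist_kernel_primitive (b - t)) t :> dist_kernel (b - t)" for t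
      unfolding dist_kernel_primitive_def dist_kernel_def
      by (auto intro!: derivative_eq_intros simp: power2_eq_square field_simps)
  qed (use assms dist_kernel_pos less_imp_le in \<open>auto simp: dist_kernel_def\<close>)
  then show ?thesis by (simp add: dist_kernel_primitive_def algebra_simps)
qed

lemma nn_integral_dist_kernel_from_left:
  assumes "a \<le> b"
  shows "(\<integral>\<^sup>+t. ennreal (dist_kernel (t - a)) * indicator {a..b} t \<partial>lborel)
       = ennreal (dist_kernel_primitive (b - a))"
proof -
  have "(\<integral>\<^sup>+t. ennreal (dist_kernel (t - a)) * indicator {a..b} t \<partial>lborel)
      = ennreal (dist_kernel_primitive (b - a) - dist_kernel_primitive (a - a))"
  proof (rule nn_integral_FTC_Icc)
    show "DERIV (\<lambda>t. dist_kernel_primitive (t - a)) t :> dist_kernel (t - a)" for t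
      unfolding dist_kernel_primitive_def dist_kernel_def
      by (auto intro!: derivative_eq_intros simp: power2_eq_square field_simps)
  qed (use assms dist_kernel_pos less_imp_le in \<open>auto simp: dist_kernel_def\<close>)
  then show ?thesis by (simp add: dist_kernel_primitive_def)
qed

definition quant_mean :: "real \<Rightarrow> real" where
  "quant_mean z = dist_kernel_primitive z + dist_kernel_primitive (1 - z)"

lemma coord_mean_quantitative:
  assumes "\<not> k < p" "0 \<le> z" "z \<le> 1"
  shows "coord_mean p s k z = ennreal (quant_mean z)"
proof -
  let ?f = "\<lambda>t. ennreal (dist_kernel \<bar>t - z\<bar>)"
  have [measurable]: "?f \<in> borel_measurable borel"
    by (simp add: dist_kernel_def)
  have "coord_mean p s k z = (\<integral>\<^sup>+t. ?f t * indicator {0..1} t \<partial>lborel)"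
    using assms(1) by (simp add: coord_mean_def coord_measure_def coord_kernel_def nn_integral_uniform_measure
        divide_ennreal_def)
  also have "\<dots> = (\<integral>\<^sup>+t. ?f t * indicator {0..z} t \<partial>lborel) + (\<integral>\<^sup>+t. ?f t * indicator {z..1} t \<partial>lborel)"
    using assms by (intro nn_integral_Icc_split) auto
  also have "(\<integral>\<^sup>+t. ?f t * indicator {0..z} t \<partial>lborel)
      = (\<integral>\<^sup>+t. ennreal (dist_kernel (z - t)) * indicator {0..z} t \<partial>lborel)"
    by (intro nn_integral_cong) (simp add: indicator_def)
  also have "(\<integral>\<^sup>+t. ?f t * indicator {z..1} t \<partial>lborel)
      = (\<integral>\<^sup>+t. ennreal (dist_kernel (t - z)) * indicator {z..1} t \<partial>lborel)"
    by (intro nn_integral_cong) (simp add: indicator_def)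
  finally show ?thesis
    using assms
    by (simp add: nn_integral_dist_kernel_from_right nn_integral_dist_kernel_from_left quant_mean_def
        dist_kernel_primitive_nonneg flip: ennreal_plus)
qed

lemma nn_integral_quant_mean:
  "(\<integral>\<^sup>+z. ennreal (quant_mean z) * indicator {0..1} z \<partial>lborel)
     = ennreal (4/3)"
proof -
  define P where "P u = 3/4 * u^2 - u^3/6 + u^4/12" for u :: real
  have "(\<integral>\<^sup>+z. ennreal (quant_mean z) * indicator {0..1} z \<partial>lborel)
     = ennreal ((P 1 - P (1 - 1)) - (P 0 - P (1 - 0)))"
  proof (rule nn_integral_FTC_Icc)
    show "DERIV (\<lambda>z. P z - P (1 - z)) z :> quant_mean z" for z
      unfolding P_def quant_mean_def dist_kernel_primitive_def
      by (auto intro!: derivative_eq_intros simp: power2_eq_square power3_eq_cube field_simps)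
    show "quant_mean \<in> borel_measurable borel"
      by (simp add: quant_mean_def[abs_def] dist_kernel_primitive_def)
  qed (auto simp: quant_mean_def intro!: add_nonneg_nonneg dist_kernel_primitive_nonneg)
  then show ?thesis by (simp add: P_def)
qed

definition design_levels :: "nat \<Rightarrow> nat \<Rightarrow> nat \<Rightarrow> real set" where
  "design_levels p s k = (if k < p then real ` {0..<s} else {1/4, 3/4})"

lemma coord_mean_design_level:
  assumes "z \<in> design_levels p s k"
  shows "coord_mean p s k z = ennreal (if k < p then qual_mean s else 4/3)"
proof (cases "k < p")
  case True
  then show ?thesis using assms by (simp add: design_levels_def coord_mean_qualitative)
next
  case False
  then have "z = 1/4 \<or> z = 3/4" using assms by (simp add: design_levels_def)
  then show ?thesis
    using False by (elim disjE; hypsubst;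
      simp add: coord_mean_quantitative quant_mean_def dist_kernel_primitive_def power2_eq_square
        power3_eq_cube)
qed

lemma borel_measurable_coord_mean:
  assumes "k < p \<Longrightarrow> 0 < s"
  shows "coord_mean p s k \<in> borel_measurable borel"
proof -
  interpret prob_space "coord_measure p s k"
    using prob_space_coord_measure[OF assms] .
  have "(\<lambda>(z, t). ennreal (coord_kernel p k t z)) \<in> borel_measurable (borel \<Otimes>\<^sub>M coord_measure p s k)"
    unfolding split_beta'
    by (intro measurable_compose[OF _ measurable_ennreal] borel_measurable_coord_kernel
        measurable_compose[OF measurable_snd borel_measurable_coord_measure[of "\<lambda>x. x"]])
      (auto intro: measurable_fst'')
  then show ?thesis
    unfolding coord_mean_def[abs_def] by (rule borel_measurable_nn_integral)
qed

lemma nn_integral_coord_mean: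
  assumes "k < p \<Longrightarrow> 0 < s"
  shows "(\<integral>\<^sup>+z. coord_mean p s k z \<partial>coord_measure p s k) = ennreal (if k < p then qual_mean s else 4/3)"
proof (cases "k < p")
  case True
  interpret prob_space "coord_measure p s k"
    using prob_space_coord_measure[OF assms] .
  have "(\<integral>\<^sup>+z. coord_mean p s k z \<partial>coord_measure p s k) = (\<integral>\<^sup>+z. ennreal (qual_mean s) \<partial>coord_measure p s k)"
    using True by (intro nn_integral_cong)
      (simp add: coord_measure_def space_uniform_count_measure coord_mean_qualitative)
  then show ?thesis using True by (simp add: emeasure_space_1)
next
  case False
  have [measurable]: "coord_mean p s k \<in> borel_measurable borel"
    using borel_measurable_coord_mean[OF assms] .
  have "(\<integral>\<^sup>+z. coord_mean p s k z \<partial>coord_measure p s k) = (\<integral>\<^sup>+z. coord_mean p s k z * indicator {0..1} z \<partial>lborel)"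
    using False by (simp add: coord_measure_def nn_integral_uniform_measure divide_ennreal_def)
  also have "\<dots> = (\<integral>\<^sup>+z. ennreal (quant_mean z) * indicator {0..1} z \<partial>lborel)"
    using False by (intro nn_integral_cong) (simp add: indicator_def coord_mean_quantitative)
  finally show ?thesis
    using False by (simp add: nn_integral_quant_mean)
qed

lemma nn_integral_kernel_QQ:
  assumes "0 < p \<Longrightarrow> 0 < s"
  shows "(\<integral>\<^sup>+t. ennreal (kernel_QQ p q t z) \<partial>F_QQ p q s) = (\<Prod>k\<in>{0..<p+q}. coord_mean p s k (z k))"
proof -
  interpret product_sigma_finite "coord_measure p s"
    using prob_space_coord_measure assms
    by (simp add: product_sigma_finite_def prob_space_imp_sigma_finite)
  have "(\<integral>\<^sup>+t. ennreal (kernel_QQ p q t z) \<partial>F_QQ p q s)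
      = (\<integral>\<^sup>+t. (\<Prod>k\<in>{0..<p+q}. ennreal (coord_kernel p k (t k) (z k))) \<partial>F_QQ p q s)"
    unfolding kernel_QQ_eq_prod_coord_kernel
    by (intro nn_integral_cong) (simp add: prod_ennreal coord_kernel_nonneg)
  also have "\<dots> = (\<Prod>k\<in>{0..<p+q}. coord_mean p s k (z k))"
    unfolding F_QQ_def coord_mean_def
    by (rule product_nn_integral_prod) (auto intro!: borel_measurable_coord_measure)
  finally show ?thesis .
qed

lemma prod_if_less_eq_power:
  "(\<Prod>k\<in>{0..<p+q}. if k < p then a else b) = a ^ p * (b :: 'a :: comm_monoid_mult) ^ q"
proof -
  have "{0..<p+q} = {0..<p} \<union> {p..<p+q}" by auto
  then show ?thesis by (simp add: prod.union_disjoint)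
qed

lemma integral_kernel_QQ_design_level:
  assumes "0 < p \<Longrightarrow> 0 < s" and "\<And>k. k < p + q \<Longrightarrow> z k \<in> design_levels p s k"
  shows "integral\<^sup>L (F_QQ p q s) (\<lambda>t. kernel_QQ p q t z) = qual_mean s ^ p * (4/3) ^ q"
proof -
  have "(\<integral>\<^sup>+t. ennreal (kernel_QQ p q t z) \<partial>F_QQ p q s)
      = (\<Prod>k\<in>{0..<p+q}. ennreal (if k < p then qual_mean s else 4/3))"
    using assms by (simp add: nn_integral_kernel_QQ coord_mean_design_level)
  also have "\<dots> = ennreal (qual_mean s ^ p * (4/3) ^ q)"
    by (simp add: prod_ennreal qual_mean_def prod_if_less_eq_power)
  moreover have "(\<lambda>t. kernel_QQ p q t z) \<in> borel_measurable (F_QQ p q s)"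
    by (intro borel_measurable_kernel_QQ borel_measurable_F_QQ_component) auto
  ultimately show ?thesis
    by (simp add: integral_eq_nn_integral kernel_QQ_nonneg qual_mean_def)
qed

lemma integral_kernel_QQ:
  assumes "0 < p \<Longrightarrow> 0 < s"
  shows "integral\<^sup>L (F_QQ p q s \<Otimes>\<^sub>M F_QQ p q s) (\<lambda>(t, z). kernel_QQ p q t z) = qual_mean s ^ p * (4/3) ^ q"
proof -
  interpret product_sigma_finite "coord_measure p s"
    using prob_space_coord_measure assms
    by (simp add: product_sigma_finite_def prob_space_imp_sigma_finite)
  interpret pair_sigma_finite "F_QQ p q s" "F_QQ p q s"
    using prob_space_F_QQ[OF assms] by (simp add: pair_sigma_finite_def prob_space_imp_sigma_finite)
  have "(\<lambda>w. kernel_QQ p q (fst w) (snd w)) \<in> borel_measurable (F_QQ p q s \<Otimes>\<^sub>M F_QQ p q s)"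
    by (intro borel_measurable_kernel_QQ measurable_compose[OF measurable_fst borel_measurable_F_QQ_component]
        measurable_compose[OF measurable_snd borel_measurable_F_QQ_component])
  then have measurable: "(\<lambda>(t, z). kernel_QQ p q t z) \<in> borel_measurable (F_QQ p q s \<Otimes>\<^sub>M F_QQ p q s)"
    by (simp add: split_beta')
  have "(\<integral>\<^sup>+w. ennreal (case w of (t, z) \<Rightarrow> kernel_QQ p q t z) \<partial>(F_QQ p q s \<Otimes>\<^sub>M F_QQ p q s))
      = (\<integral>\<^sup>+z. (\<Prod>k\<in>{0..<p+q}. coord_mean p s k (z k)) \<partial>F_QQ p q s)"
    using measurable by (simp add: nn_integral_snd[symmetric] split_beta' nn_integral_kernel_QQ assms)
  also have "\<dots> = (\<Prod>k\<in>{0..<p+q}. ennreal (if k < p then qual_mean s else 4/3))"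
    unfolding F_QQ_def using assms
    by (simp add: product_nn_integral_prod borel_measurable_coord_measure borel_measurable_coord_mean
        nn_integral_coord_mean)
  also have "\<dots> = ennreal (qual_mean s ^ p * (4/3) ^ q)"
    by (simp add: prod_ennreal qual_mean_def prod_if_less_eq_power)
  finally show ?thesis
    using measurable by (simp add: integral_eq_nn_integral split_beta' kernel_QQ_nonneg qual_mean_def)
qed

section \<open>Counting lemmas\<close>

definition mod_defect :: "nat \<Rightarrow> nat \<Rightarrow> real" where
  "mod_defect n N = real (n mod N) * (1 - real (n mod N) / real N)"

lemma sum_squares_nat_lower_bound:
  fixes c :: "'a \<Rightarrow> nat"
  assumes "finite C" "card C = N" "0 < N" "(\<Sum>x\<in>C. c x) = n"
  shows "real n ^ 2 / N + mod_defect n N \<le> (\<Sum>x\<in>C. real (c x) ^ 2)"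
proof -
  define m where "m = n div N"
  have n_eq: "real n = real N * real m + real (n mod N)"
    unfolding m_def by (metis div_mult_mod_eq of_nat_add of_nat_mult mult.commute)
  have consecutive: "0 \<le> (real (c x) - real m) * (real (c x) - real m - 1)" for x
  proof (cases "c x \<le> m")
    case True
    then show ?thesis by (intro mult_nonpos_nonpos) auto
  next
    case False
    then show ?thesis by (intro mult_nonneg_nonneg) auto
  qed
  have "0 \<le> (\<Sum>x\<in>C. (real (c x) - real m) * (real (c x) - real m - 1))"
    by (intro sum_nonneg consecutive)
  also have "\<dots> = (\<Sum>x\<in>C. real (c x) ^ 2 - (2 * real m + 1) * real (c x) + real m * (real m + 1))"
    by (intro sum.cong) (auto simp: algebra_simps power2_eq_square)
  also have "\<dots> = (\<Sum>x\<in>C. real (c x) ^ 2) - (2 * real m + 1) * real n + real N * real m * (real m + 1)"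
    using assms by (simp add: sum.distrib sum_subtractf flip: sum_distrib_left of_nat_sum)
  also have "(2 * real m + 1) * real n - real N * real m * (real m + 1) = real n ^ 2 / N + mod_defect n N"
    using assms(3) unfolding mod_defect_def n_eq by (simp add: field_simps power2_eq_square)
  ultimately show ?thesis by linarith
qed

lemma sum_of_bool_eq_lower_bound:
  assumes "finite A" "finite C" "f ` A \<subseteq> C" "card C = N" "0 < N"
  shows "real (card A) ^ 2 / N + mod_defect (card A) N \<le> (\<Sum>i\<in>A. \<Sum>j\<in>A. of_bool (f i = f j))"
proof -
  define c where "c y = card {i\<in>A. f i = y}" for y
  have "(\<Sum>i\<in>A. \<Sum>j\<in>A. of_bool (f i = f j)) = (\<Sum>i\<in>A. real (c (f i)))"
    using assms(1) by (intro sum.cong) (auto simp: c_def Int_def intro!: arg_cong[where f = card])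
  also have "\<dots> = (\<Sum>y\<in>C. \<Sum>i\<in>{i\<in>A. f i = y}. real (c (f i)))"
    using assms by (intro sum.group[symmetric]) auto
  also have "\<dots> = (\<Sum>y\<in>C. real (c y) ^ 2)"
    by (simp add: c_def power2_eq_square)
  finally have squares: "(\<Sum>i\<in>A. \<Sum>j\<in>A. of_bool (f i = f j)) = (\<Sum>y\<in>C. real (c y) ^ 2)" .
  have "card A = (\<Sum>y\<in>C. c y)"
    using sum.group[OF assms(1-3), of "\<lambda>_. 1 :: nat"] by (simp add: c_def)
  then show ?thesis
    unfolding squares using assms(2,4,5) by (intro sum_squares_nat_lower_bound) auto
qed

lemma sum_Pow_card:
  assumes "finite P"
  shows "(\<Sum>A\<in>Pow P. u (card A)) = (\<Sum>a\<le>card P. of_nat (card P choose a) * (u a :: 'a :: comm_semiring_1))"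
proof -
  have "(\<Sum>A\<in>Pow P. u (card A)) = (\<Sum>a\<le>card P. \<Sum>A\<in>{A\<in>Pow P. card A = a}. u (card A))"
    using assms by (intro sum.group[symmetric]) (auto simp: card_mono)
  also have "\<dots> = (\<Sum>a\<le>card P. of_nat (card P choose a) * u a)"
  proof (intro sum.cong refl)
    fix a
    have "{A\<in>Pow P. card A = a} = {A. A \<subseteq> P \<and> card A = a}" by auto
    then show "(\<Sum>A\<in>{A\<in>Pow P. card A = a}. u (card A)) = of_nat (card P choose a) * u a"
      using n_subsets[OF assms] by simp
  qed
  finally show ?thesis .
qed

lemma sum_Pow_Un_card_Int:
  assumes "finite P" "finite Q" "P \<inter> Q = {}"
  shows "(\<Sum>S\<in>Pow (P \<union> Q). h (card (S \<inter> P)) (card (S \<inter> Q)))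
       = (\<Sum>a\<le>card P. \<Sum>b\<le>card Q.
            of_nat (card P choose a) * of_nat (card Q choose b) * (h a b :: 'a :: comm_semiring_1))"
proof -
  have "bij_betw (\<lambda>(A, B). A \<union> B) (Pow P \<times> Pow Q) (Pow (P \<union> Q))"
    by (rule bij_betw_byWitness[where f' = "\<lambda>S. (S \<inter> P, S \<inter> Q)"]) (use assms in auto)
  then have "(\<Sum>S\<in>Pow (P \<union> Q). h (card (S \<inter> P)) (card (S \<inter> Q)))
      = (\<Sum>(A, B)\<in>Pow P \<times> Pow Q. h (card ((A \<union> B) \<inter> P)) (card ((A \<union> B) \<inter> Q)))"
    by (simp add: sum.reindex_bij_betw[symmetric] split_beta')
  also have "\<dots> = (\<Sum>(A, B)\<in>Pow P \<times> Pow Q. h (card A) (card B))"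
  proof (intro sum.cong refl, clarsimp)
    fix A B assume "A \<subseteq> P" "B \<subseteq> Q"
    then have "(A \<union> B) \<inter> P = A" "(A \<union> B) \<inter> Q = B" using assms(3) by auto
    then show "h (card ((A \<union> B) \<inter> P)) (card ((A \<union> B) \<inter> Q)) = h (card A) (card B)" by simp
  qed
  also have "\<dots> = (\<Sum>A\<in>Pow P. \<Sum>b\<le>card Q. of_nat (card Q choose b) * h (card A) b)"
    using assms(2) by (simp add: sum.cartesian_product[symmetric] sum_Pow_card)
  also have "\<dots> = (\<Sum>a\<le>card P. of_nat (card P choose a) * (\<Sum>b\<le>card Q. of_nat (card Q choose b) * h a b))"
    using assms(1) by (rule sum_Pow_card)
  finally show ?thesis
    by (simp add: sum_distrib_left mult.assoc)
qed

lemma sum_binomial_rectangle_eq_antidiagonals: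
  "(\<Sum>a\<le>p. \<Sum>b\<le>q. of_nat (p choose a) * of_nat (q choose b) * g a b)
     = (\<Sum>k\<le>p+q. \<Sum>a\<le>k. of_nat (p choose a) * of_nat (q choose (k - a)) * (g a (k - a) :: 'a :: comm_semiring_1))"
proof -
  let ?F = "\<lambda>a b. of_nat (p choose a) * of_nat (q choose b) * g a b :: 'a"
  have zero: "?F a b = 0" if "p < a \<or> q < b" for a b
    using that by (elim disjE) (simp_all add: binomial_eq_0)
  have "(\<Sum>a\<le>p. \<Sum>b\<le>q. ?F a b) = (\<Sum>(a, b)\<in>{..p} \<times> {..q}. ?F a b)"
    by (simp add: sum.cartesian_product)
  also have "\<dots> = (\<Sum>(a, b)\<in>{(a, b). a + b \<le> p + q}. ?F a b)"
  proof (rule sum.mono_neutral_left)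
    show "finite {(a, b). a + b \<le> p + q}"
      by (rule finite_subset[of _ "{..p+q} \<times> {..p+q}"]) auto
  qed (use zero in \<open>(force simp: not_le)+\<close>)
  also have "\<dots> = (\<Sum>k\<le>p+q. \<Sum>a\<le>k. ?F a (k - a))"
    by (rule sum.triangle_reindex_eq)
  finally show ?thesis .
qed

section \<open>The pair sum of a design\<close>

lemma prod_of_bool:
  "finite S \<Longrightarrow> (\<Prod>k\<in>S. of_bool (P k) :: 'a :: comm_semiring_1) = of_bool (\<forall>k\<in>S. P k)"
  by (induction S rule: finite_induct) auto

lemma coord_kernel_design_level:
  assumes "a \<in> design_levels p s k" "b \<in> design_levels p s k"
  shows "coord_kernel p k a b = 5/4 * (of_bool (a = b) / 5 + 1)"
proof (cases "k < p")
  case False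
  then have "a = 1/4 \<or> a = 3/4" "b = 1/4 \<or> b = 3/4"
    using assms by (auto simp: design_levels_def)
  then show ?thesis
    using False by (elim disjE; hypsubst; simp add: coord_kernel_def dist_kernel_def power2_eq_square)
qed (simp add: coord_kernel_def)

lemma kernel_QQ_design_level_expansion:
  assumes "\<And>k. k < p + q \<Longrightarrow> z k \<in> design_levels p s k"
    and "\<And>k. k < p + q \<Longrightarrow> z' k \<in> design_levels p s k"
  shows "kernel_QQ p q z z'
       = (5/4) ^ (p+q) * (\<Sum>S\<in>Pow {0..<p+q}. (1/5) ^ card S * of_bool (\<forall>k\<in>S. z k = z' k))"
proof -
  let ?I = "{0..<p+q}"
  have "kernel_QQ p q z z' = (\<Prod>k\<in>?I. 5/4 * (of_bool (z k = z' k) / 5 + 1))"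
    unfolding kernel_QQ_eq_prod_coord_kernel using assms
    by (intro prod.cong refl coord_kernel_design_level) auto
  also have "\<dots> = (5/4) ^ (p+q) * (\<Prod>k\<in>?I. of_bool (z k = z' k) / 5 + 1)"
    unfolding prod.distrib by simp
  also have "(\<Prod>k\<in>?I. of_bool (z k = z' k) / 5 + 1 :: real)
      = (\<Sum>S\<in>Pow ?I. (\<Prod>k\<in>S. of_bool (z k = z' k) / 5) * (\<Prod>k\<in>?I - S. 1))"
    by (rule prod_add) simp
  also have "\<dots> = (\<Sum>S\<in>Pow ?I. (1/5) ^ card S * of_bool (\<forall>k\<in>S. z k = z' k))"
    by (intro sum.cong refl)
      (auto simp: prod_dividef prod_of_bool power_one_over finite_subset)
  finally show ?thesis .
qed

definition cell_count :: "nat \<Rightarrow> nat \<Rightarrow> nat set \<Rightarrow> nat" where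
  "cell_count p s S = (\<Prod>k\<in>S. if k < p then s else 2)"

lemma card_design_levels: "card (design_levels p s k) = (if k < p then s else 2)"
  by (simp add: design_levels_def card_image)

lemma card_PiE_design_levels: "finite S \<Longrightarrow> card (PiE S (design_levels p s)) = cell_count p s S"
  by (simp add: card_PiE cell_count_def card_design_levels)

lemma cell_count_pos: "(0 < p \<Longrightarrow> 0 < s) \<Longrightarrow> 0 < cell_count p s S"
  unfolding cell_count_def by (cases "finite S") (auto intro!: prod_pos)

lemma sum_kernel_QQ_design_level_ge:
  assumes "0 < p \<Longrightarrow> 0 < s" and levels: "\<And>i k. i < n \<Longrightarrow> k < p + q \<Longrightarrow> x i k \<in> design_levels p s k"
  shows "(5/4) ^ (p+q) * (\<Sum>S\<in>Pow {0..<p+q}. (1/5) ^ card S *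
            (real n ^ 2 / cell_count p s S + mod_defect n (cell_count p s S)))
         \<le> (\<Sum>i<n. \<Sum>j<n. kernel_QQ p q (x i) (x j))"
proof -
  let ?I = "{0..<p+q}"
  have pairs_ge: "real n ^ 2 / cell_count p s S + mod_defect n (cell_count p s S)
      \<le> (\<Sum>i<n. \<Sum>j<n. of_bool (\<forall>k\<in>S. x i k = x j k))" if "S \<subseteq> ?I" for S
  proof -
    have "finite S" using that by (rule finite_subset) simp
    have "(\<lambda>i. restrict (x i) S) ` {..<n} \<subseteq> PiE S (design_levels p s)"
      using that levels by auto
    then have "real n ^ 2 / cell_count p s S + mod_defect n (cell_count p s S)
        \<le> (\<Sum>i<n. \<Sum>j<n. of_bool (restrict (x i) S = restrict (x j) S))"
      using sum_of_bool_eq_lower_bound[of "{..<n}" "PiE S (design_levels p s)"] \<open>finite S\<close> assms(1)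
      by (simp add: card_PiE_design_levels cell_count_pos finite_PiE design_levels_def)
    also have "\<dots> = (\<Sum>i<n. \<Sum>j<n. of_bool (\<forall>k\<in>S. x i k = x j k))"
      by (intro sum.cong refl) (auto simp: fun_eq_iff restrict_def)
    finally show ?thesis .
  qed
  let ?eq = "\<lambda>i j S. of_bool (\<forall>k\<in>S. x i k = x j k) :: real"
  have "(\<Sum>i<n. \<Sum>j<n. kernel_QQ p q (x i) (x j))
      = (\<Sum>i<n. \<Sum>j<n. (5/4) ^ (p+q) * (\<Sum>S\<in>Pow ?I. (1/5) ^ card S * ?eq i j S))"
    using levels by (intro sum.cong refl kernel_QQ_design_level_expansion) auto
  also have "\<dots> = (5/4) ^ (p+q) * (\<Sum>i<n. \<Sum>j<n. \<Sum>S\<in>Pow ?I. (1/5) ^ card S * ?eq i j S)"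
    by (simp only: sum_distrib_left)
  also have "\<dots> = (5/4) ^ (p+q) * (\<Sum>S\<in>Pow ?I. \<Sum>i<n. \<Sum>j<n. (1/5) ^ card S * ?eq i j S)"
    by (simp only: sum.swap[of _ "{..<n}" "Pow ?I"])
  also have "\<dots> = (5/4) ^ (p+q) * (\<Sum>S\<in>Pow ?I. (1/5) ^ card S * (\<Sum>i<n. \<Sum>j<n. ?eq i j S))"
    by (simp only: sum_distrib_left)
  finally have expansion: "(\<Sum>i<n. \<Sum>j<n. kernel_QQ p q (x i) (x j))
      = (5/4) ^ (p+q) * (\<Sum>S\<in>Pow ?I. (1/5) ^ card S * (\<Sum>i<n. \<Sum>j<n. ?eq i j S))" .
  show ?thesis
    unfolding expansion by (intro mult_left_mono sum_mono pairs_ge) auto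
qed

lemma sum_Pow_inverse_cell_count:
  assumes "0 < p \<Longrightarrow> 0 < s"
  shows "(5/4) ^ (p+q) * (\<Sum>S\<in>Pow {0..<p+q}. (1/5) ^ card S / cell_count p s S) = qual_mean s ^ p * (11/8) ^ q"
proof -
  let ?I = "{0..<p+q}"
  define w where "w k = 1 / (5 * real (if k < p then s else 2))" for k
  have "(\<Sum>S\<in>Pow ?I. (1/5) ^ card S / cell_count p s S) = (\<Sum>S\<in>Pow ?I. \<Prod>k\<in>S. w k)"
    by (intro sum.cong refl)
      (simp add: w_def cell_count_def prod_dividef prod.distrib power_one_over of_nat_prod)
  also have "\<dots> = (\<Prod>k\<in>?I. w k + 1)"
    by (simp add: prod_add)
  finally have "(5/4) ^ (p+q) * (\<Sum>S\<in>Pow ?I. (1/5) ^ card S / cell_count p s S)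
      = (5/4) ^ (p+q) * (\<Prod>k\<in>?I. w k + 1)"
    by simp
  also have "\<dots> = (\<Prod>k\<in>?I. 5/4 * (w k + 1))"
    unfolding prod.distrib by simp
  also have "\<dots> = (\<Prod>k\<in>?I. if k < p then qual_mean s else 11/8)"
    using assms by (intro prod.cong refl) (auto simp: w_def qual_mean_def field_simps)
  finally show ?thesis
    by (simp add: prod_if_less_eq_power)
qed

lemma cell_count_split:
  assumes "S \<subseteq> {0..<p+q}"
  shows "cell_count p s S = s ^ card (S \<inter> {0..<p}) * 2 ^ card (S \<inter> {p..<p+q})"
proof -
  have "finite S" using assms by (rule finite_subset) simp
  moreover have "S \<inter> {k. k < p} = S \<inter> {0..<p}" "S \<inter> - {k. k < p} = S \<inter> {p..<p+q}"
    using assms by auto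
  ultimately show ?thesis
    by (simp add: cell_count_def prod.If_cases)
qed

lemma sum_Pow_mod_defect_cell_count:
  "(\<Sum>S\<in>Pow {0..<p+q}. (1/5) ^ card S * mod_defect n (cell_count p s S))
     = (\<Sum>k=1..p+q. (1/5)^k * (\<Sum>k1=0..k.
          let k2 = k - k1; r = real (n mod (s^k1 * 2^k2)) in
          real (p choose k1) * real (q choose k2) * r * (1 - r / (real s^k1 * 2^k2))))"
proof -
  let ?P = "{0..<p}" and ?Q = "{p..<p+q}"
  define h where "h a b = (1/5 :: real) ^ (a + b) * mod_defect n (s ^ a * 2 ^ b)" for a b
  have PQ: "?P \<union> ?Q = {0..<p+q}" by auto
  have "card S = card (S \<inter> ?P) + card (S \<inter> ?Q)" if "S \<subseteq> ?P \<union> ?Q" for S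
    using that by (subst card_Un_disjoint[symmetric]) (auto intro: finite_subset arg_cong[where f = card])
  then have "(\<Sum>S\<in>Pow {0..<p+q}. (1/5) ^ card S * mod_defect n (cell_count p s S))
      = (\<Sum>S\<in>Pow (?P \<union> ?Q). h (card (S \<inter> ?P)) (card (S \<inter> ?Q)))"
    unfolding PQ h_def by (intro sum.cong refl) (simp add: cell_count_split)
  also have "\<dots> = (\<Sum>a\<le>p. \<Sum>b\<le>q. real (p choose a) * real (q choose b) * h a b)"
    using sum_Pow_Un_card_Int[of ?P ?Q h] by simp
  also have "\<dots> = (\<Sum>k\<le>p+q. \<Sum>a\<le>k. real (p choose a) * real (q choose (k - a)) * h a (k - a))"
    by (rule sum_binomial_rectangle_eq_antidiagonals)
  also have "\<dots> = (\<Sum>k\<in>{0..p+q}. (1/5)^k * (\<Sum>k1=0..k.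
          let k2 = k - k1; r = real (n mod (s^k1 * 2^k2)) in
          real (p choose k1) * real (q choose k2) * r * (1 - r / (real s^k1 * 2^k2))))"
    unfolding atMost_atLeast0
    by (intro sum.cong refl) (auto simp: sum_distrib_left h_def mod_defect_def Let_def mult_ac intro!: sum.cong)
  also have "\<dots> = (\<Sum>k=1..p+q. (1/5)^k * (\<Sum>k1=0..k.
          let k2 = k - k1; r = real (n mod (s^k1 * 2^k2)) in
          real (p choose k1) * real (q choose k2) * r * (1 - r / (real s^k1 * 2^k2))))"
    by (simp add: sum.atLeast_Suc_atMost)
  finally show ?thesis .
qed

lemma design_point_in_design_levels:
  assumes "in_U n s p D1" "in_U n 2 q D2" "i < n" "k < p + q"
  shows "design_point p q D1 D2 i k \<in> design_levels p s k"
proof (cases "k < p")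
  case True
  then show ?thesis
    using assms unfolding in_U_def balanced_col_def design_point_def design_levels_def by auto
next
  case False
  then have "D2 i (k - p) < 2"
    using assms unfolding in_U_def balanced_col_def by auto
  then have "D2 i (k - p) = 0 \<or> D2 i (k - p) = 1" by auto
  then show ?thesis
    using False assms(4) unfolding design_point_def design_levels_def by auto
qed

lemma in_U_levels_pos: "in_U n s p D \<Longrightarrow> 0 < n \<Longrightarrow> 0 < p \<Longrightarrow> 0 < s"
  unfolding in_U_def balanced_col_def by fastforce

lemma QQD2_eq_sum_kernel_QQ:
  assumes "0 < n" "0 < p \<Longrightarrow> 0 < s"
    and "\<And>i k. i < n \<Longrightarrow> k < p + q \<Longrightarrow> design_point p q D1 D2 i k \<in> design_levels p s k"
  shows "QQD2 n p q s D1 D2 = - (qual_mean s ^ p * (4/3) ^ q)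
           + (\<Sum>i<n. \<Sum>j<n. kernel_QQ p q (design_point p q D1 D2 i) (design_point p q D1 D2 j)) / real n ^ 2"
  using assms
  by (simp add: QQD2_def Let_def integral_kernel_QQ integral_kernel_QQ_design_level)

lemma LB2_eq_sum_Pow_cell_count:
  assumes "0 < n" "0 < p \<Longrightarrow> 0 < s"
  shows "LB2 n p q s = - (qual_mean s ^ p * (4/3) ^ q)
           + (5/4) ^ (p+q) * (\<Sum>S\<in>Pow {0..<p+q}. (1/5) ^ card S *
               (real n ^ 2 / cell_count p s S + mod_defect n (cell_count p s S))) / real n ^ 2"
proof -
  define A where "A = qual_mean s ^ p * (11/8) ^ q"
  define B where "B = (\<Sum>S\<in>Pow {0..<p+q}. (1/5) ^ card S * mod_defect n (cell_count p s S))"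
  define C where "C = (\<Sum>S\<in>Pow {0..<p+q}. (1/5) ^ card S / cell_count p s S)"
  have "(\<Sum>S\<in>Pow {0..<p+q}. (1/5) ^ card S * (real n ^ 2 / cell_count p s S + mod_defect n (cell_count p s S)))
      = real n ^ 2 * C + B"
    unfolding B_def C_def by (simp add: distrib_left sum.distrib sum_distrib_left mult_ac)
  moreover have "LB2 n p q s = - (qual_mean s ^ p * (4/3) ^ q) + A + 1 / real n ^ 2 * (5/4) ^ (p+q) * B"
    unfolding LB2_def A_def B_def sum_Pow_mod_defect_cell_count qual_mean_def ..
  moreover have "(5/4) ^ (p+q) * C = A"
    unfolding A_def C_def using sum_Pow_inverse_cell_count[of p s q, OF assms(2)] .
  ultimately show ?thesis
    using assms(1) by (simp add: field_simps)
qed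

theorem theorem5:
  fixes n p q s :: nat and D1 D2 :: "nat \<Rightarrow> nat \<Rightarrow> nat"
  assumes "n > 0"
    and "in_U n s p D1"
    and "in_U n 2 q D2"
  shows "QQD2 n p q s D1 D2 \<ge> LB2 n p q s"
proof -
  have s_pos: "0 < p \<Longrightarrow> 0 < s"
    using in_U_levels_pos[OF assms(2,1)] .
  have levels: "\<And>i k. i < n \<Longrightarrow> k < p + q \<Longrightarrow> design_point p q D1 D2 i k \<in> design_levels p s k"
    using design_point_in_design_levels assms(2,3) .
  show ?thesis
    using sum_kernel_QQ_design_level_ge[where x = "design_point p q D1 D2" and n = n and q = q, OF s_pos levels]
    by (simp add: QQD2_eq_sum_kernel_QQ[OF assms(1) s_pos levels] LB2_eq_sum_Pow_cell_count[OF assms(1) s_pos]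
        divide_right_mono)
qed

end
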